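(* Let $D\subset\mathbb{R}^2$ be a closed disk containing the unit square $Q=[0,1]^2$ and let $f:D\to D$ be an $N$-to-1 local homeomorphism satisfying Assumptions 1 and 2 below. Let $S=\{1,\dots,N,1',\dots,N'\}$, $Z=\{a,b\}$ and $\tau:S\to Z$ with $\tau(i)=a$, $\tau(i')=b$. Then $f$ has an invariant Cantor set $\Lambda\subset\big(\bigcup_{s\in S}V^s\big)\cap(H_a\cup H_b)$ and there is a homeomorphism $\phi:\Lambda\to\Sigma_{Z,S}$ onto the zip shift space such that $\phi\circ f=\sigma_\tau\circ\phi$ on $\Lambda$, where $\sigma_\tau$ is the zip shift map.
   Context: Fix $0<\mu_h,\mu_v<1$. A horizontal curve is the graph of $h:[0,1]\to[0,1]$ with Lipschitz constant $\mu_h$; a vertical curve is the graph $\{(v(y),y)\}$ of $v:[0,1]\to[0,1]$ with Lipschitz constant $\mu_v$. A horizontal strip is $\{(x,y):x\in[0,1],\ h(x)\le y\le h'(x)\}$ for horizontal curves with $0\le h<h'\le1$; a vertical strip is $\{(x,y):y\in[0,1],\ v(y)\le x\le v'(y)\}$ for vertical curves with $0\le v<v'\le1$; widths are $d(H)=\max_x|h(x)-h'(x)|$, $d(V)=\max_y|v(y)-v'(y)|$. An $N$-to-1 local homeomorphism $f:D\to D$ is a map for which there are disjoint connected subsets $Q_1,\dots,Q_N$ of $D$ such that each restriction $f|_{Q_i}:Q_i\to f(Q_i)$ is a homeomorphism. Assumption 1: there are disjoint horizontal strips $H_a,H_b\subset Q$ and $2N$ disjoint vertical strips $V^i,V^{i'}\subset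 Q_i$ ($i=1,\dots,N$) such that $f$ maps each $V^i$ homeomorphically onto $H_a$ and each $V^{i'}$ homeomorphically onto $H_b$, with horizontal (resp. vertical) boundaries mapped to horizontal (resp. vertical) boundaries. Assumption 2: there are $0<\alpha_V,\alpha_H<1$ such that for every vertical strip $V$ contained in some $V^l$, $l\in S$, the set $f^{-1}(V)\cap V^l$ is a vertical strip with $d(f^{-1}(V)\cap V^l)<\alpha_V d(V)$, and for every horizontal strip $H$ contained in some $H_k$, $k\in Z$, the set $f(H)\cap H_k$ is a horizontal strip with $d(f(H)\cap H_k)\le\alpha_H d(H)$. The zip shift space $\Sigma_{Z,S}$ is the set of bi-infinite sequences $x=(x_i)_{i\in\mathbb{Z}}$ with $x_i\in S$ for $i\ge0$ and $x_i\in Z$ for $i<0$, with metric $d(x,y)=2^{-\min\{|i|:x_i\ne y_i\}}$; the zip shift map is $(\sigma_\tau x)_i=x_{i+1}$ for $i\ne-1$, $(\sigma_\tau x)_{-1}=\tau(x_0)$. *)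

theory Defs
  imports "HOL-Analysis.Analysis"
begin

text \<open>Alphabet: the symbols a, b of Z and the symbols i (SU i), i' (SP i) of S.\<close>
datatype letter = La | Lb | SU nat | SP nat

definition Zset :: "letter set" where "Zset = {La, Lb}"

definition Sset :: "nat \<Rightarrow> letter set" where "Sset N = SU ` {1..N} \<union> SP ` {1..N}"

fun tau :: "letter \<Rightarrow> letter" where
  "tau (SU i) = La"
| "tau (SP i) = Lb"
| "tau _ = La"

definition zip_space :: "nat \<Rightarrow> (int \<Rightarrow> letter) set" where
  "zip_space N = {x. (\<forall>i\<ge>0. x i \<in> Sset N) \<and> (\<forall>i<0. x i \<in> Zset)}"

definition zip_dist :: "(int \<Rightarrow> letter) \<Rightarrow> (int \<Rightarrow> letter) \<Rightarrow> real" where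
  "zip_dist x y = (if x = y then 0
      else 2 powr (- real (LEAST n. \<exists>i. nat \<bar>i\<bar> = n \<and> x i \<noteq> y i)))"

definition zip_shift :: "(int \<Rightarrow> letter) \<Rightarrow> int \<Rightarrow> letter" where
  "zip_shift x = (\<lambda>i. if i = -1 then tau (x 0) else x (i + 1))"

definition unit_sq :: "(real \<times> real) set" where "unit_sq = {0..1} \<times> {0..1}"

definition curve :: "real \<Rightarrow> (real \<Rightarrow> real) \<Rightarrow> bool" where
  "curve \<mu> h \<longleftrightarrow> h ` {0..1} \<subseteq> {0..1} \<and> \<mu>-lipschitz_on {0..1} h"

definition hset :: "(real \<Rightarrow> real) \<Rightarrow> (real \<Rightarrow> real) \<Rightarrow> (real \<times> real) set" where
  "hset h h' = {(x, y). x \<in> {0..1} \<and> h x \<le> y \<and> y \<le> h' x}"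

definition vset :: "(real \<Rightarrow> real) \<Rightarrow> (real \<Rightarrow> real) \<Rightarrow> (real \<times> real) set" where
  "vset v v' = {(x, y). y \<in> {0..1} \<and> v y \<le> x \<and> x \<le> v' y}"

definition hstrip_by :: "real \<Rightarrow> (real \<Rightarrow> real) \<Rightarrow> (real \<Rightarrow> real) \<Rightarrow> (real \<times> real) set \<Rightarrow> bool" where
  "hstrip_by \<mu> h h' H \<longleftrightarrow> curve \<mu> h \<and> curve \<mu> h' \<and> (\<forall>x\<in>{0..1}. h x < h' x) \<and> H = hset h h'"

definition vstrip_by :: "real \<Rightarrow> (real \<Rightarrow> real) \<Rightarrow> (real \<Rightarrow> real) \<Rightarrow> (real \<times> real) set \<Rightarrow> bool" where
  "vstrip_by \<mu> v v' V \<longleftrightarrow> curve \<mu> v \<and> curve \<mu> v' \<and> (\<forall>y\<in>{0..1}. v y < v' y) \<and> V = vset v v'"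

definition is_hstrip :: "real \<Rightarrow> (real \<times> real) set \<Rightarrow> bool" where
  "is_hstrip \<mu> H \<longleftrightarrow> (\<exists>h h'. hstrip_by \<mu> h h' H)"

definition is_vstrip :: "real \<Rightarrow> (real \<times> real) set \<Rightarrow> bool" where
  "is_vstrip \<mu> V \<longleftrightarrow> (\<exists>v v'. vstrip_by \<mu> v v' V)"

definition curve_gap :: "(real \<Rightarrow> real) \<Rightarrow> (real \<Rightarrow> real) \<Rightarrow> real" where
  "curve_gap h h' = (SUP t\<in>{0..1}. \<bar>h t - h' t\<bar>)"

text \<open>Widths d(H), d(V): the maximal distance of the bounding curves (these curves are
  uniquely determined on [0,1] by the strip).\<close>
definition hwidth :: "(real \<times> real) set \<Rightarrow> real" where
  "hwidth H = (THE w. \<exists>h h'. (\<forall>x\<in>{0..1}. h x < h' x) \<and> H = hset h h' \<and> w = curve_gap h h')"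

definition vwidth :: "(real \<times> real) set \<Rightarrow> real" where
  "vwidth V = (THE w. \<exists>v v'. (\<forall>y\<in>{0..1}. v y < v' y) \<and> V = vset v v' \<and> w = curve_gap v v')"

definition hstrip_hbd :: "(real \<Rightarrow> real) \<Rightarrow> (real \<Rightarrow> real) \<Rightarrow> (real \<times> real) set" where
  "hstrip_hbd h h' = {(x, h x) | x. x \<in> {0..1}} \<union> {(x, h' x) | x. x \<in> {0..1}}"

definition hstrip_vbd :: "(real \<Rightarrow> real) \<Rightarrow> (real \<Rightarrow> real) \<Rightarrow> (real \<times> real) set" where
  "hstrip_vbd h h' = {(x, y). x \<in> {0, 1} \<and> h x \<le> y \<and> y \<le> h' x}"

definition vstrip_hbd :: "(real \<Rightarrow> real) \<Rightarrow> (real \<Rightarrow> real) \<Rightarrow> (real \<times> real) set" where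
  "vstrip_hbd v v' = {(x, y). y \<in> {0, 1} \<and> v y \<le> x \<and> x \<le> v' y}"

definition vstrip_vbd :: "(real \<Rightarrow> real) \<Rightarrow> (real \<Rightarrow> real) \<Rightarrow> (real \<times> real) set" where
  "vstrip_vbd v v' = {(v y, y) | y. y \<in> {0..1}} \<union> {(v' y, y) | y. y \<in> {0..1}}"

definition cantor_set :: "(real \<times> real) set \<Rightarrow> bool" where
  "cantor_set K \<longleftrightarrow> K \<noteq> {} \<and> compact K \<and> (\<forall>x\<in>K. x islimpt K)
     \<and> (\<forall>C. C \<subseteq> K \<and> connected C \<longrightarrow> (\<forall>x\<in>C. \<forall>y\<in>C. x = y))"

end

theory Submission
  imports Defs
begin

text \<open>A point is coded by the strips its orbit visits. For a zip sequence x the set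
  \<open>rect x n\<close> is the intersection of the vertical strip of points whose forward orbit runs
  through \<open>V x\<^sub>0, \<dots>, V x\<^sub>n\<close> with the horizontal strip of points having a backward orbit
  through \<open>H x\<^sub>-\<^sub>1, \<dots>, H x\<^sub>-\<^sub>n\<^sub>-\<^sub>1\<close>. Assumption 2 shrinks the widths of these strips
  geometrically, and a vertical and a horizontal strip with Lipschitz constants below 1 always
  meet, in a set whose diameter is bounded by a multiple of the sum of their widths. So the
  rectangles shrink to a point \<open>point_of x\<close>, and f acts on codes by the zip shift. Disjointness
  of the strips and injectivity of f on each \<open>V s\<close> make the coding injective; being continuous
  on the compact zip shift space, a product of finite discrete spaces, it is a homeomorphism onto
  its image \<open>\<Lambda>\<close>, which is therefore a Cantor set.\<close>

section \<open>Strips in the unit square\<close>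

lemma curve_continuous_on: "curve \<mu> h \<Longrightarrow> continuous_on {0..1} h"
  unfolding curve_def using lipschitz_on_continuous_on by blast

lemma curve_in_unit: "curve \<mu> h \<Longrightarrow> t \<in> {0..1} \<Longrightarrow> h t \<in> {0..1}"
  unfolding curve_def by blast

lemma curve_diff_le_1:
  assumes "curve \<mu> h" "curve \<mu>' h'" "t \<in> {0..1}"
  shows "\<bar>h t - h' t\<bar> \<le> 1"
  using curve_in_unit[OF assms(1,3)] curve_in_unit[OF assms(2,3)] by auto

lemma curve_gap_upper:
  assumes "curve \<mu> h" "curve \<mu>' h'" "t \<in> {0..1}"
  shows "\<bar>h t - h' t\<bar> \<le> curve_gap h h'"
  unfolding curve_gap_def
  by (rule cSUP_upper[OF assms(3)] bdd_aboveI2 curve_diff_le_1[OF assms(1,2)])+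

lemma curve_gap_le_1: "curve \<mu> h \<Longrightarrow> curve \<mu>' h' \<Longrightarrow> curve_gap h h' \<le> 1"
  unfolding curve_gap_def by (rule cSUP_least) (auto intro: curve_diff_le_1)

lemma swap_image_eq_iff: "prod.swap ` A = B \<longleftrightarrow> A = prod.swap ` B"
  by (auto simp: image_comp)

lemma vset_eq_swap_hset: "vset v v' = prod.swap ` hset v v'"
  unfolding vset_def hset_def by (auto simp: image_iff)

lemma vstrip_by_iff_hstrip_by_swap: "vstrip_by \<mu> v v' V \<longleftrightarrow> hstrip_by \<mu> v v' (prod.swap ` V)"
  unfolding vstrip_by_def hstrip_by_def vset_eq_swap_hset swap_image_eq_iff ..

lemma hset_determines_curves:
  assumes "\<forall>x\<in>{0..1}. h x \<le> h' x" "\<forall>x\<in>{0..1}. u x \<le> u' x" "hset h h' = hset u u'"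
    and "x \<in> {0..1}"
  shows "h x = u x \<and> h' x = u' x"
proof -
  have "(x, h x) \<in> hset u u'" "(x, h' x) \<in> hset u u'" "(x, u x) \<in> hset h h'" "(x, u' x) \<in> hset h h'"
    using assms by (auto simp: hset_def)
  then show ?thesis by (auto simp: hset_def)
qed

lemma hwidth_eq_curve_gap:
  assumes "hstrip_by \<mu> h h' W"
  shows "hwidth W = curve_gap h h'"
  unfolding hwidth_def
proof (rule the_equality)
  show "\<exists>u u'. (\<forall>x\<in>{0..1}. u x < u' x) \<and> W = hset u u' \<and> curve_gap h h' = curve_gap u u'"
    using assms unfolding hstrip_by_def by blast
next
  fix w assume "\<exists>u u'. (\<forall>x\<in>{0..1}. u x < u' x) \<and> W = hset u u' \<and> w = curve_gap u u'"
  then obtain u u' where u: "\<forall>x\<in>{0..1}. u x < u' x" "W = hset u u'" "w = curve_gap u u'"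
    by blast
  have "\<And>x. x \<in> {0..1} \<Longrightarrow> u x = h x \<and> u' x = h' x"
    using hset_determines_curves[of u u' h h'] u assms unfolding hstrip_by_def
    by (simp add: less_imp_le)
  then show "w = curve_gap h h'"
    unfolding u(3) curve_gap_def by (intro SUP_cong) auto
qed

lemma vwidth_eq_hwidth_swap: "vwidth V = hwidth (prod.swap ` V)"
proof -
  have "V = vset v v' \<longleftrightarrow> prod.swap ` V = hset v v'" for v v'
    unfolding vset_eq_swap_hset swap_image_eq_iff ..
  then show ?thesis unfolding vwidth_def hwidth_def by simp
qed

lemma vwidth_eq_curve_gap: "vstrip_by \<mu> v v' W \<Longrightarrow> vwidth W = curve_gap v v'"
  unfolding vwidth_eq_hwidth_swap vstrip_by_iff_hstrip_by_swap by (rule hwidth_eq_curve_gap)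

lemma hwidth_le_1:
  assumes "is_hstrip \<mu> W"
  shows "hwidth W \<le> 1"
proof -
  obtain h h' where W: "hstrip_by \<mu> h h' W"
    using assms unfolding is_hstrip_def by blast
  then have "curve_gap h h' \<le> 1"
    unfolding hstrip_by_def by (blast intro: curve_gap_le_1)
  then show ?thesis
    unfolding hwidth_eq_curve_gap[OF W] .
qed

lemma vwidth_le_1: "is_vstrip \<mu> W \<Longrightarrow> vwidth W \<le> 1"
  unfolding is_vstrip_def vstrip_by_iff_hstrip_by_swap vwidth_eq_hwidth_swap
  by (blast intro: hwidth_le_1[unfolded is_hstrip_def])

lemma closed_hstrip:
  assumes "hstrip_by \<mu> h h' W"
  shows "closed W"
proof -
  have fst_comp: "continuous_on ({0..1} \<times> UNIV) (\<lambda>p. g (fst p))"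
    if "continuous_on {0..1} g" for g :: "real \<Rightarrow> real"
    by (rule continuous_on_compose2[OF that continuous_on_fst[OF continuous_on_id]]) auto
  have c: "continuous_on ({0..1} \<times> UNIV) (\<lambda>p. h (fst p))" "continuous_on ({0..1} \<times> UNIV) (\<lambda>p. h' (fst p))"
    using assms curve_continuous_on fst_comp unfolding hstrip_by_def by auto
  have "W = {p \<in> {0..1} \<times> UNIV. h (fst p) \<le> snd p} \<inter> {p \<in> {0..1} \<times> UNIV. snd p \<le> h' (fst p)}"
    using assms unfolding hstrip_by_def hset_def by auto
  also have "closed \<dots>"
    by (intro closed_Int continuous_on_closed_Collect_le c closed_Times continuous_on_snd continuous_on_id) auto
  finally show ?thesis .
qed

lemma closed_vstrip:
  assumes "vstrip_by \<mu> v v' W"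
  shows "closed W"
proof -
  have "closed (prod.swap -` (prod.swap ` W))"
    using assms unfolding vstrip_by_iff_hstrip_by_swap
    by (intro continuous_closed_vimage closed_hstrip) (auto intro!: continuous_intros simp: prod.swap_def)
  then show ?thesis by (simp add: inj_vimage_image_eq)
qed
text \<open>A fixed point y of \<open>h \<circ> v\<close> gives the point \<open>(v y, y)\<close> on the left boundary of the
  vertical strip and the lower boundary of the horizontal one.\<close>

lemma vstrip_Int_hstrip_nonempty:
  assumes "vstrip_by \<mu> v v' A" "hstrip_by \<mu>' h h' B"
  shows "A \<inter> B \<noteq> {}"
proof -
  have v: "continuous_on {0..1} v" "v ` {0..1} \<subseteq> {0..1}"
    and h: "continuous_on {0..1} h" "h ` {0..1} \<subseteq> {0..1}"
    using assms curve_continuous_on unfolding vstrip_by_def hstrip_by_def curve_def by auto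
  have "continuous_on {0..1} (\<lambda>y. h (v y) - y)"
    by (intro continuous_intros continuous_on_compose2[OF h(1) v(1) v(2)])
  moreover have "h (v 1) - 1 \<le> 0" "0 \<le> h (v 0) - 0"
    using v(2) h(2) by (auto simp: image_subset_iff)
  ultimately obtain y where y: "y \<in> {0..1}" "h (v y) = y"
    using IVT2'[of "\<lambda>y. h (v y) - y" 1 0 0] by auto
  have "v y \<in> {0..1}" using v(2) y(1) by (auto simp: image_subset_iff)
  then have "v y < v' y" "h (v y) < h' (v y)"
    using assms y(1) unfolding vstrip_by_def hstrip_by_def by auto
  then have "(v y, y) \<in> A \<inter> B"
    using assms y \<open>v y \<in> {0..1}\<close> unfolding vstrip_by_def vset_def hstrip_by_def hset_def
    by (auto simp: less_imp_le)
  then show ?thesis by blast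
qed

lemma sum_le_of_mutual_linear_bounds:
  fixes X Y a b u w :: real
  assumes "0 \<le> a" "a \<le> 1" "0 \<le> b" "b \<le> 1" "a * b < 1" "0 \<le> u" "0 \<le> w"
    and X: "X \<le> a * Y + u" and Y: "Y \<le> b * X + w"
  shows "X + Y \<le> 2 * (u + w) / (1 - a * b)"
proof -
  have "a * Y \<le> a * (b * X + w)" using Y assms(1) by (rule mult_left_mono)
  moreover have "b * X \<le> b * (a * Y + u)" using X assms(3) by (rule mult_left_mono)
  moreover have "a * w \<le> w" "b * u \<le> u" using assms by (simp_all add: mult_left_le_one_le)
  ultimately have "(1 - a * b) * (X + Y) \<le> 2 * (u + w)"
    using X Y by (simp add: algebra_simps)
  then show ?thesis using assms(5) by (simp add: pos_le_divide_eq mult.commute)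
qed

lemma dist_le_in_vstrip_Int_hstrip:
  assumes V: "vstrip_by \<mu>v v v' A" and H: "hstrip_by \<mu>h h h' B" and mu: "\<mu>h < 1" "\<mu>v < 1"
    and p: "p \<in> A \<inter> B" and q: "q \<in> A \<inter> B"
  shows "dist p q \<le> 2 * (curve_gap v v' + curve_gap h h') / (1 - \<mu>h * \<mu>v)"
proof -
  obtain a b c d where pq: "p = (a, b)" "q = (c, d)" by fastforce
  have cv: "curve \<mu>v v" "curve \<mu>v v'" and ch: "curve \<mu>h h" "curve \<mu>h h'"
    using V H unfolding vstrip_by_def hstrip_by_def by auto
  have in_strips: "b \<in> {0..1}" "v b \<le> a" "a \<le> v' b" "a \<in> {0..1}" "h a \<le> b" "b \<le> h' a"
    "d \<in> {0..1}" "v d \<le> c" "c \<le> v' d" "c \<in> {0..1}" "h c \<le> d" "d \<le> h' c"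
    using p q pq V H unfolding vstrip_by_def hstrip_by_def by (auto simp: vset_def hset_def)
  have lip: "\<bar>v b - v d\<bar> \<le> \<mu>v * \<bar>b - d\<bar>" "\<bar>h a - h c\<bar> \<le> \<mu>h * \<bar>a - c\<bar>"
    using lipschitz_onD[of \<mu>v "{0..1}" v b d] lipschitz_onD[of \<mu>h "{0..1}" h a c] cv ch in_strips
    unfolding curve_def by (auto simp: dist_real_def)
  have gap: "v' b - v b \<le> curve_gap v v'" "v' d - v d \<le> curve_gap v v'"
    "h' a - h a \<le> curve_gap h h'" "h' c - h c \<le> curve_gap h h'"
    using curve_gap_upper[OF cv, of b] curve_gap_upper[OF cv, of d]
      curve_gap_upper[OF ch, of a] curve_gap_upper[OF ch, of c] in_strips
    by (simp_all add: abs_le_iff)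
  have mu_nonneg: "0 \<le> \<mu>v" "0 \<le> \<mu>h"
    using cv ch unfolding curve_def by (auto intro: lipschitz_on_nonneg)
  have "\<mu>h * \<mu>v \<le> \<mu>h"
    using mu mu_nonneg by (intro mult_left_le) auto
  then have "\<mu>h * \<mu>v < 1" using mu by linarith
  moreover have "\<bar>a - c\<bar> \<le> \<mu>v * \<bar>b - d\<bar> + curve_gap v v'"
    using lip(1)[unfolded abs_le_iff] gap(1,2) in_strips unfolding abs_le_iff by linarith
  moreover have "\<bar>b - d\<bar> \<le> \<mu>h * \<bar>a - c\<bar> + curve_gap h h'"
    using lip(2)[unfolded abs_le_iff] gap(3,4) in_strips unfolding abs_le_iff by linarith
  moreover have "0 \<le> curve_gap v v'" "0 \<le> curve_gap h h'"
    using gap(1,3) in_strips by linarith+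
  ultimately have "\<bar>a - c\<bar> + \<bar>b - d\<bar> \<le> 2 * (curve_gap v v' + curve_gap h h') / (1 - \<mu>v * \<mu>h)"
    using mu mu_nonneg by (intro sum_le_of_mutual_linear_bounds) (auto simp: mult.commute)
  moreover have "dist p q \<le> \<bar>a - c\<bar> + \<bar>b - d\<bar>"
    unfolding pq dist_Pair_Pair dist_real_def using sqrt_sum_squares_le_sum_abs[of "a - c" "b - d"] by simp
  ultimately show ?thesis by (simp add: mult.commute)
qed

section \<open>The zip shift space\<close>

lemma zip_dist_less_iff:
  "zip_dist x y < 2 powr - real n \<longleftrightarrow> (\<forall>i. nat \<bar>i\<bar> \<le> n \<longrightarrow> x i = y i)"
proof (cases "x = y")
  case True
  then show ?thesis by (simp add: zip_dist_def)
next
  case False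
  define m where "m = (LEAST n. \<exists>i. nat \<bar>i\<bar> = n \<and> x i \<noteq> y i)"
  from False obtain i0 where "x i0 \<noteq> y i0" by (meson ext)
  then have m_attained: "\<exists>i. nat \<bar>i\<bar> = m \<and> x i \<noteq> y i"
    unfolding m_def using LeastI[where P = "\<lambda>n. \<exists>i. nat \<bar>i\<bar> = n \<and> x i \<noteq> y i"] by blast
  have m_least: "m \<le> nat \<bar>i\<bar>" if "x i \<noteq> y i" for i
    unfolding m_def using that by (auto intro: Least_le)
  have "zip_dist x y = 2 powr - real m"
    using False by (simp add: zip_dist_def m_def)
  then have "zip_dist x y < 2 powr - real n \<longleftrightarrow> n < m" by simp
  also have "\<dots> \<longleftrightarrow> (\<forall>i. nat \<bar>i\<bar> \<le> n \<longrightarrow> x i = y i)"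
  proof
    assume "n < m"
    then show "\<forall>i. nat \<bar>i\<bar> \<le> n \<longrightarrow> x i = y i"
      using m_least by fastforce
  next
    assume "\<forall>i. nat \<bar>i\<bar> \<le> n \<longrightarrow> x i = y i"
    then show "n < m"
      using m_attained by (auto simp: not_less[symmetric])
  qed
  finally show ?thesis .
qed

lemma Metric_space_zip_dist: "Metric_space M zip_dist"
proof
  fix x y z :: "int \<Rightarrow> letter"
  show "0 \<le> zip_dist x y" "zip_dist x y = 0 \<longleftrightarrow> x = y"
    by (simp_all add: zip_dist_def)
  have "(\<exists>i. nat \<bar>i\<bar> = n \<and> x i \<noteq> y i) \<longleftrightarrow> (\<exists>i. nat \<bar>i\<bar> = n \<and> y i \<noteq> x i)" for n
    by auto
  then show "zip_dist x y = zip_dist y x"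
    unfolding zip_dist_def by auto
  show "zip_dist x z \<le> zip_dist x y + zip_dist y z"
  proof (rule ccontr)
    assume "\<not> ?thesis"
    moreover have "0 \<le> zip_dist x y" "0 \<le> zip_dist y z"
      by (simp_all add: zip_dist_def)
    ultimately obtain m where m: "zip_dist x z = 2 powr - real m"
      and "zip_dist x y < 2 powr - real m" "zip_dist y z < 2 powr - real m"
      by (cases "x = z") (auto simp: zip_dist_def)
    then have "zip_dist x z < 2 powr - real m"
      unfolding zip_dist_less_iff by simp
    then show False using m by simp
  qed
qed

interpretation zip: Metric_space "zip_space N" zip_dist
  by (rule Metric_space_zip_dist)

definition zip_alphabet :: "nat \<Rightarrow> int \<Rightarrow> letter set" where
  "zip_alphabet N i = (if 0 \<le> i then Sset N else Zset)"

lemma zip_space_eq_PiE: "zip_space N = (\<Pi>\<^sub>E i\<in>UNIV. zip_alphabet N i)"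
proof (rule set_eqI)
  fix x :: "int \<Rightarrow> letter"
  have "(\<forall>i. x i \<in> zip_alphabet N i) \<longleftrightarrow> (\<forall>i\<ge>0. x i \<in> Sset N) \<and> (\<forall>i<0. x i \<in> Zset)"
    unfolding zip_alphabet_def by (meson not_le)
  then show "x \<in> zip_space N \<longleftrightarrow> x \<in> (\<Pi>\<^sub>E i\<in>UNIV. zip_alphabet N i)"
    by (simp add: zip_space_def PiE_UNIV_domain Pi_iff)
qed

lemma zip_mball_eq_cylinder:
  assumes "x \<in> zip_space N"
  shows "zip.mball N x (2 powr - real n)
    = (\<Pi>\<^sub>E i\<in>UNIV. if nat \<bar>i\<bar> \<le> n then {x i} else zip_alphabet N i)"
  using assms unfolding zip.mball_def
  by (auto simp: zip_dist_less_iff zip_space_eq_PiE PiE_UNIV_domain Pi_iff split: if_splits)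

lemma ex_two_powr_neg_less: "0 < r \<Longrightarrow> \<exists>n. 2 powr - real n < r"
  using real_arch_pow_inv[of r "1/2"]
  by (simp add: powr_minus powr_realpow power_one_over inverse_eq_divide)

lemma zip_mball_contains_cylinder:
  assumes "x \<in> zip_space N" "0 < r"
  obtains U where "finite {i. U i \<noteq> zip_alphabet N i}" "\<forall>i. U i \<subseteq> zip_alphabet N i"
    "x \<in> Pi\<^sub>E UNIV U" "Pi\<^sub>E UNIV U \<subseteq> zip.mball N x r"
proof -
  obtain n where n: "2 powr - real n < r"
    using ex_two_powr_neg_less[OF assms(2)] by blast
  define U where "U = (\<lambda>i. if nat \<bar>i\<bar> \<le> n then {x i} else zip_alphabet N i)"
  have "{i. U i \<noteq> zip_alphabet N i} \<subseteq> {- int n..int n}"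
    by (auto simp: U_def split: if_splits)
  then have "finite {i. U i \<noteq> zip_alphabet N i}"
    by (rule finite_subset) simp
  moreover have "\<forall>i. U i \<subseteq> zip_alphabet N i" "x \<in> Pi\<^sub>E UNIV U"
    using assms(1) by (auto simp: U_def zip_space_eq_PiE)
  moreover have "Pi\<^sub>E UNIV U = zip.mball N x (2 powr - real n)"
    unfolding U_def zip_mball_eq_cylinder[OF assms(1)] ..
  then have "Pi\<^sub>E UNIV U \<subseteq> zip.mball N x r"
    using zip.mball_subset_concentric n by auto
  ultimately show ?thesis
    using that by blast
qed

lemma cylinder_contains_zip_mball:
  assumes "finite {i. U i \<noteq> zip_alphabet N i}" "x \<in> Pi\<^sub>E UNIV U" "x \<in> zip_space N"
  obtains r where "0 < r" "zip.mball N x r \<subseteq> Pi\<^sub>E UNIV U"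
proof -
  obtain n where n: "\<And>i. U i \<noteq> zip_alphabet N i \<Longrightarrow> nat \<bar>i\<bar> \<le> n"
    using assms(1) finite_nat_set_iff_bounded_le[of "(\<lambda>i. nat \<bar>i\<bar>) ` {i. U i \<noteq> zip_alphabet N i}"]
    by auto
  have "(\<Pi>\<^sub>E i\<in>UNIV. if nat \<bar>i\<bar> \<le> n then {x i} else zip_alphabet N i) \<subseteq> Pi\<^sub>E UNIV U"
  proof (intro PiE_mono)
    fix i
    show "(if nat \<bar>i\<bar> \<le> n then {x i} else zip_alphabet N i) \<subseteq> U i"
      using assms(2) n[of i] by (auto simp: PiE_iff)
  qed
  then show ?thesis
    using that[of "2 powr - real n"] zip_mball_eq_cylinder[OF assms(3)] by simp
qed

lemma zip_mtopology_eq_product_topology: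
  "zip.mtopology N = product_topology (\<lambda>i. discrete_topology (zip_alphabet N i)) UNIV"
proof (rule topology_eq[THEN iffD2], intro allI iffI)
  fix S
  assume S: "openin (zip.mtopology N) S"
  show "openin (product_topology (\<lambda>i. discrete_topology (zip_alphabet N i)) UNIV) S"
    unfolding openin_product_topology_alt topspace_discrete_topology
  proof
    fix x assume "x \<in> S"
    then obtain r where x: "x \<in> zip_space N" and r: "0 < r" "zip.mball N x r \<subseteq> S"
      using S unfolding zip.openin_mtopology by blast
    obtain U where "finite {i. U i \<noteq> zip_alphabet N i}" "\<forall>i. U i \<subseteq> zip_alphabet N i"
      "x \<in> Pi\<^sub>E UNIV U" "Pi\<^sub>E UNIV U \<subseteq> zip.mball N x r"
      by (rule zip_mball_contains_cylinder[OF x r(1)])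
    then show "\<exists>U. finite {i \<in> UNIV. U i \<noteq> zip_alphabet N i}
        \<and> (\<forall>i\<in>UNIV. openin (discrete_topology (zip_alphabet N i)) (U i))
        \<and> x \<in> Pi\<^sub>E UNIV U \<and> Pi\<^sub>E UNIV U \<subseteq> S"
      using r(2) by (intro exI[of _ U]) auto
  qed
next
  fix S
  assume S: "openin (product_topology (\<lambda>i. discrete_topology (zip_alphabet N i)) UNIV) S"
  then have "S \<subseteq> zip_space N"
    using openin_subset by (fastforce simp: zip_space_eq_PiE)
  moreover have "\<exists>r>0. zip.mball N x r \<subseteq> S" if "x \<in> S" for x
  proof -
    obtain U where U: "finite {i. U i \<noteq> zip_alphabet N i}" "x \<in> Pi\<^sub>E UNIV U" "Pi\<^sub>E UNIV U \<subseteq> S"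
      using S \<open>x \<in> S\<close> unfolding openin_product_topology_alt topspace_discrete_topology by auto
    moreover obtain r where "0 < r" "zip.mball N x r \<subseteq> Pi\<^sub>E UNIV U"
      using cylinder_contains_zip_mball[OF U(1,2)] \<open>S \<subseteq> zip_space N\<close> \<open>x \<in> S\<close> by blast
    ultimately show ?thesis
      by blast
  qed
  ultimately show "openin (zip.mtopology N) S"
    unfolding zip.openin_mtopology by blast
qed

lemma compact_space_zip: "compact_space (zip.mtopology N)"
  unfolding zip_mtopology_eq_product_topology compact_space_product_topology
  by (simp add: compact_space_discrete_topology zip_alphabet_def Sset_def Zset_def)

lemma connected_subset_singleton_if_homeomorphic_product_discrete:
  assumes g: "homeomorphic_map (top_of_set K) (product_topology (\<lambda>i. discrete_topology (A i)) I) g"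
    and C: "C \<subseteq> K" "connected C"
  shows "\<exists>a. C \<subseteq> {a}"
proof -
  have gC: "connectedin (product_topology (\<lambda>i. discrete_topology (A i)) I) (g ` C)"
    using C by (intro connectedin_continuous_map_image[OF homeomorphic_imp_continuous_map[OF g]])
      (simp add: connectedin_subtopology)
  have g_eq: "g p = g q" if "p \<in> C" "q \<in> C" for p q
  proof
    fix i
    show "g p i = g q i"
    proof (cases "i \<in> I")
      case True
      then have "connectedin (discrete_topology (A i)) ((\<lambda>x. x i) ` g ` C)"
        by (intro connectedin_continuous_map_image[OF continuous_map_product_projection gC])
      then show ?thesis
        using that unfolding connectedin_discrete_topology by blast
    next
      case False
      have "g ` C \<subseteq> (\<Pi>\<^sub>E i\<in>I. A i)"
        using connectedin_subset_topspace[OF gC] by simp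
      then show ?thesis
        using that False by (metis PiE_arb image_subset_iff)
    qed
  qed
  have "inj_on g C"
    using inj_on_subset[OF homeomorphic_imp_injective_map[OF g]] C(1) by simp
  show ?thesis
  proof (cases "C = {}")
    case False
    then obtain p where "p \<in> C" by blast
    then have "C \<subseteq> {p}"
      using g_eq \<open>inj_on g C\<close> unfolding inj_on_def by blast
    then show ?thesis by blast
  qed auto
qed

lemma tau_in_Zset: "tau s \<in> Zset"
  by (cases s) (auto simp: Zset_def)

lemma zip_shift_in_zip_space: "x \<in> zip_space N \<Longrightarrow> zip_shift x \<in> zip_space N"
  by (auto simp: zip_space_def zip_shift_def tau_in_Zset)

definition zip_prepend :: "letter \<Rightarrow> (int \<Rightarrow> letter) \<Rightarrow> int \<Rightarrow> letter" where
  "zip_prepend s x = (\<lambda>j. if j = 0 then s else x (j - 1))"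

lemma zip_prepend_in_zip_space:
  "s \<in> Sset N \<Longrightarrow> x \<in> zip_space N \<Longrightarrow> zip_prepend s x \<in> zip_space N"
  by (auto simp: zip_space_def zip_prepend_def)

lemma zip_shift_zip_prepend: "tau s = x (-1) \<Longrightarrow> zip_shift (zip_prepend s x) = x"
  by (auto simp: zip_shift_def zip_prepend_def)

definition tau_section :: "letter \<Rightarrow> letter" where
  "tau_section z = (if z = La then SU 1 else SP 1)"

lemma tau_section_in_Sset: "1 \<le> N \<Longrightarrow> tau_section z \<in> Sset N"
  by (auto simp: tau_section_def Sset_def)

lemma tau_tau_section: "z \<in> Zset \<Longrightarrow> tau (tau_section z) = z"
  by (auto simp: tau_section_def Zset_def)

lemma zip_shift_image: "1 \<le> N \<Longrightarrow> zip_shift ` zip_space N = zip_space N"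
proof (intro subset_antisym subsetI)
  fix x assume N: "1 \<le> N" and x: "x \<in> zip_space N"
  have "x (-1) \<in> Zset"
    using x by (simp add: zip_space_def)
  then have "x = zip_shift (zip_prepend (tau_section (x (-1))) x)"
    by (simp add: zip_shift_zip_prepend tau_tau_section)
  moreover have "zip_prepend (tau_section (x (-1))) x \<in> zip_space N"
    using zip_prepend_in_zip_space[OF tau_section_in_Sset[OF N] x] .
  ultimately show "x \<in> zip_shift ` zip_space N"
    by (rule image_eqI)
qed (auto intro: zip_shift_in_zip_space)

section \<open>Nested rectangles and the coding map\<close>

definition future_word :: "(int \<Rightarrow> letter) \<Rightarrow> nat \<Rightarrow> letter list" where
  "future_word x n = map (\<lambda>i. x (int i)) [0..<Suc n]"

definition past_word :: "(int \<Rightarrow> letter) \<Rightarrow> nat \<Rightarrow> letter list" where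
  "past_word x n = map (\<lambda>i. x (- int i - 1)) [0..<Suc n]"

lemma future_word_0 [simp]: "future_word x 0 = [x 0]"
  and past_word_0 [simp]: "past_word x 0 = [x (-1)]"
  by (simp_all add: future_word_def past_word_def)

lemma future_word_Suc: "future_word x (Suc n) = future_word x n @ [x (int (Suc n))]"
  and past_word_Suc: "past_word x (Suc n) = past_word x n @ [x (- int (Suc n) - 1)]"
  by (simp_all add: future_word_def past_word_def)

lemma future_word_Suc_zip_shift: "future_word x (Suc n) = x 0 # future_word (zip_shift x) n"
  unfolding future_word_def zip_shift_def by (subst map_upt_Suc) (simp add: add.commute)

lemma past_word_zip_shift_Suc: "past_word (zip_shift x) (Suc n) = tau (x 0) # past_word x n"
proof -
  have minus_one: "- 1 - a = - a - 1" for a :: int by simp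
  show ?thesis
    unfolding past_word_def zip_shift_def by (subst map_upt_Suc) (simp add: minus_one)
qed

lemma length_future_word [simp]: "length (future_word x n) = Suc n"
  by (simp add: future_word_def)

lemma future_word_nth: "i \<le> n \<Longrightarrow> future_word x n ! i = x (int i)"
  unfolding future_word_def by (simp del: upt_Suc add: nth_map)

lemma words_in_alphabets:
  "x \<in> zip_space N \<Longrightarrow> set (future_word x n) \<subseteq> Sset N \<and> set (past_word x n) \<subseteq> Zset"
  unfolding future_word_def past_word_def zip_space_def by auto

lemma words_cong:
  "(\<And>i. nat \<bar>i\<bar> \<le> Suc n \<Longrightarrow> x i = y i) \<Longrightarrow> future_word x n = future_word y n \<and> past_word x n = past_word y n"
  unfolding future_word_def past_word_def by simp

locale zip_horseshoe =
  fixes f :: "real \<times> real \<Rightarrow> real \<times> real" and N :: nat and \<mu>h \<mu>v \<alpha>V \<alpha>H :: real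
    and H V :: "letter \<Rightarrow> (real \<times> real) set"
  assumes N_pos: "1 \<le> N"
    and lipschitz_consts: "0 \<le> \<mu>h" "\<mu>h < 1" "0 \<le> \<mu>v" "\<mu>v < 1"
    and contraction_consts: "0 \<le> \<alpha>V" "\<alpha>V < 1" "0 \<le> \<alpha>H" "\<alpha>H < 1"
    and H_strip: "\<And>z. z \<in> Zset \<Longrightarrow> is_hstrip \<mu>h (H z)"
    and H_disjoint: "H La \<inter> H Lb = {}"
    and V_strip: "\<And>s. s \<in> Sset N \<Longrightarrow> is_vstrip \<mu>v (V s)"
    and V_disjoint: "\<And>s t. s \<in> Sset N \<Longrightarrow> t \<in> Sset N \<Longrightarrow> s \<noteq> t \<Longrightarrow> V s \<inter> V t = {}"
    and bij_V_H: "\<And>s. s \<in> Sset N \<Longrightarrow> bij_betw f (V s) (H (tau s))"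
    and vstrip_preimage: "\<And>W j l. j \<in> Sset N \<Longrightarrow> l \<in> Sset N \<Longrightarrow> is_vstrip \<mu>v W \<Longrightarrow> W \<subseteq> V j \<Longrightarrow>
          is_vstrip \<mu>v (f -` W \<inter> V l) \<and> vwidth (f -` W \<inter> V l) \<le> \<alpha>V * vwidth W"
    and hstrip_image: "\<And>W j k. j \<in> Zset \<Longrightarrow> k \<in> Zset \<Longrightarrow> is_hstrip \<mu>h W \<Longrightarrow> W \<subseteq> H j \<Longrightarrow>
          is_hstrip \<mu>h (f ` W \<inter> H k) \<and> hwidth (f ` W \<inter> H k) \<le> \<alpha>H * hwidth W"
begin

lemma lipschitz_prod_lt_1: "\<mu>h * \<mu>v < 1"
proof -
  have "\<mu>h * \<mu>v \<le> \<mu>h"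
    using lipschitz_consts by (intro mult_left_le) auto
  then show ?thesis
    using lipschitz_consts by linarith
qed

text \<open>\<open>vcyl [s\<^sub>0, \<dots>, s\<^sub>n]\<close> is the paper's \<open>V\<^sub>s\<^sub>0\<^sub>\<dots>\<^sub>s\<^sub>n\<close>, the points p with
  \<open>f\<^sup>k p \<in> V s\<^sub>k\<close>; \<open>hcyl [z\<^sub>1, \<dots>, z\<^sub>n]\<close> is \<open>H\<^sub>z\<^sub>1\<^sub>\<dots>\<^sub>z\<^sub>n\<close>, the points of \<open>H z\<^sub>1\<close>
  that are images of points of \<open>H\<^sub>z\<^sub>2\<^sub>\<dots>\<^sub>z\<^sub>n\<close>.\<close>

fun vcyl :: "letter list \<Rightarrow> (real \<times> real) set" where
  "vcyl [] = UNIV"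
| "vcyl (s # u) = V s \<inter> f -` vcyl u"

fun hcyl :: "letter list \<Rightarrow> (real \<times> real) set" where
  "hcyl [] = UNIV"
| "hcyl (z # u) = H z \<inter> f ` hcyl u"

lemma hcyl_singleton:
  assumes "z \<in> Zset"
  shows "hcyl [z] = H z"
proof -
  have "H z = f ` V (tau_section z)"
    using bij_V_H[OF tau_section_in_Sset[OF N_pos]] tau_tau_section[OF assms]
    by (simp add: bij_betw_def)
  then show ?thesis by auto
qed

lemma vcyl_vstrip:
  "u \<noteq> [] \<Longrightarrow> set u \<subseteq> Sset N \<Longrightarrow>
    is_vstrip \<mu>v (vcyl u) \<and> vwidth (vcyl u) \<le> \<alpha>V ^ (length u - 1) \<and> vcyl u \<subseteq> V (hd u)"
proof (induction u rule: induct_list012)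
  case (2 s)
  then have "s \<in> Sset N" by simp
  then show ?case using V_strip vwidth_le_1[OF V_strip] by simp
next
  case (3 s t w)
  then have IH: "is_vstrip \<mu>v (vcyl (t # w))" "vwidth (vcyl (t # w)) \<le> \<alpha>V ^ length w"
    "vcyl (t # w) \<subseteq> V t" and st: "s \<in> Sset N" "t \<in> Sset N"
    by auto
  have "vcyl (s # t # w) = f -` vcyl (t # w) \<inter> V s" by auto
  moreover have "\<alpha>V * vwidth (vcyl (t # w)) \<le> \<alpha>V ^ length (t # w)"
    using IH(2) contraction_consts(1) by (simp add: mult_left_mono)
  ultimately show ?case
    using vstrip_preimage[OF st(2,1) IH(1,3)] by auto
qed simp

lemma hcyl_hstrip:
  "u \<noteq> [] \<Longrightarrow> set u \<subseteq> Zset \<Longrightarrow>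
    is_hstrip \<mu>h (hcyl u) \<and> hwidth (hcyl u) \<le> \<alpha>H ^ (length u - 1) \<and> hcyl u \<subseteq> H (hd u)"
proof (induction u rule: induct_list012)
  case (2 z)
  then have "z \<in> Zset" by simp
  then show ?case using H_strip hwidth_le_1[OF H_strip] hcyl_singleton by simp
next
  case (3 z y w)
  then have IH: "is_hstrip \<mu>h (hcyl (y # w))" "hwidth (hcyl (y # w)) \<le> \<alpha>H ^ length w"
    "hcyl (y # w) \<subseteq> H y" and zy: "z \<in> Zset" "y \<in> Zset"
    by auto
  have "hcyl (z # y # w) = f ` hcyl (y # w) \<inter> H z" by auto
  moreover have "\<alpha>H * hwidth (hcyl (y # w)) \<le> \<alpha>H ^ length (y # w)"
    using IH(2) contraction_consts(3) by (simp add: mult_left_mono)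
  ultimately show ?case
    using hstrip_image[OF zy(2,1) IH(1,3)] by auto
qed simp

lemma vcyl_append_subset: "vcyl (u @ w) \<subseteq> vcyl u"
  by (induction u) auto

lemma hcyl_append_subset: "hcyl (u @ w) \<subseteq> hcyl u"
  by (induction u) auto

lemma vcyl_determines_word:
  "p \<in> vcyl u \<Longrightarrow> p \<in> vcyl w \<Longrightarrow> length u = length w \<Longrightarrow> set u \<subseteq> Sset N \<Longrightarrow> set w \<subseteq> Sset N
    \<Longrightarrow> u = w"
proof (induction u arbitrary: w p)
  case (Cons s u)
  then obtain t w' where w: "w = t # w'"
    by (cases w) auto
  then have "s = t"
    using Cons.prems V_disjoint[of s t] by auto
  moreover have "u = w'"
    using Cons.IH[of "f p" w'] Cons.prems w by auto
  ultimately show ?case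
    using w by simp
qed simp

definition rect :: "(int \<Rightarrow> letter) \<Rightarrow> nat \<Rightarrow> (real \<times> real) set" where
  "rect x n = vcyl (future_word x n) \<inter> hcyl (past_word x n)"

definition diam_bound :: "nat \<Rightarrow> real" where
  "diam_bound n = 2 * (\<alpha>V ^ n + \<alpha>H ^ n) / (1 - \<mu>h * \<mu>v)"

lemma rect_strips:
  assumes "x \<in> zip_space N"
  obtains v v' h h' where "vstrip_by \<mu>v v v' (vcyl (future_word x n))" "curve_gap v v' \<le> \<alpha>V ^ n"
    "hstrip_by \<mu>h h h' (hcyl (past_word x n))" "curve_gap h h' \<le> \<alpha>H ^ n"
proof -
  have "is_vstrip \<mu>v (vcyl (future_word x n))" "vwidth (vcyl (future_word x n)) \<le> \<alpha>V ^ n"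
    "is_hstrip \<mu>h (hcyl (past_word x n))" "hwidth (hcyl (past_word x n)) \<le> \<alpha>H ^ n"
    using vcyl_vstrip[of "future_word x n"] hcyl_hstrip[of "past_word x n"] words_in_alphabets[OF assms]
    by (auto simp: future_word_def past_word_def)
  then show ?thesis
    using that vwidth_eq_curve_gap hwidth_eq_curve_gap unfolding is_vstrip_def is_hstrip_def by metis
qed

lemma closed_rect: "x \<in> zip_space N \<Longrightarrow> closed (rect x n)"
  unfolding rect_def by (rule rect_strips[of x n]) (assumption, meson closed_Int closed_vstrip closed_hstrip)

lemma rect_nonempty: "x \<in> zip_space N \<Longrightarrow> rect x n \<noteq> {}"
  unfolding rect_def by (rule rect_strips[of x n]) (assumption, rule vstrip_Int_hstrip_nonempty)

lemma rect_antimono: "m \<le> n \<Longrightarrow> rect x n \<subseteq> rect x m"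
proof (induction n rule: dec_induct)
  case (step n)
  have "rect x (Suc n) \<subseteq> rect x n"
    unfolding rect_def future_word_Suc past_word_Suc using vcyl_append_subset hcyl_append_subset by blast
  with step.IH show ?case by blast
qed simp

lemma dist_le_in_rect:
  assumes "x \<in> zip_space N" "p \<in> rect x n" "q \<in> rect x n"
  shows "dist p q \<le> diam_bound n"
proof -
  obtain v v' h h' where v: "vstrip_by \<mu>v v v' (vcyl (future_word x n))" "curve_gap v v' \<le> \<alpha>V ^ n"
    and h: "hstrip_by \<mu>h h h' (hcyl (past_word x n))" "curve_gap h h' \<le> \<alpha>H ^ n"
    using rect_strips[OF assms(1)] .
  have "dist p q \<le> 2 * (curve_gap v v' + curve_gap h h') / (1 - \<mu>h * \<mu>v)"
    using dist_le_in_vstrip_Int_hstrip[OF v(1) h(1)] lipschitz_consts assms(2,3) unfolding rect_def by auto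
  also have "\<dots> \<le> diam_bound n"
    unfolding diam_bound_def using v(2) h(2) lipschitz_prod_lt_1 by (intro divide_right_mono) auto
  finally show ?thesis .
qed

lemma diam_bound_tendsto_0: "diam_bound \<longlonglongrightarrow> 0"
proof -
  have "(\<lambda>n. 2 * (\<alpha>V ^ n + \<alpha>H ^ n) / (1 - \<mu>h * \<mu>v)) \<longlonglongrightarrow> 2 * (0 + 0) / (1 - \<mu>h * \<mu>v)"
    using contraction_consts lipschitz_prod_lt_1 by (intro tendsto_intros LIMSEQ_power_zero) auto
  then show ?thesis unfolding diam_bound_def by simp
qed

lemma ex_diam_bound_less: "0 < e \<Longrightarrow> \<exists>n. diam_bound n < e"
  using order_tendstoD(2)[OF diam_bound_tendsto_0] unfolding eventually_sequentially by blast

definition point_of :: "(int \<Rightarrow> letter) \<Rightarrow> real \<times> real" where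
  "point_of x = (THE p. \<forall>n. p \<in> rect x n)"

lemma in_all_rect_iff:
  assumes "x \<in> zip_space N"
  shows "(\<forall>n. p \<in> rect x n) \<longleftrightarrow> p = point_of x"
proof -
  have "\<exists>a. (\<Inter>n. rect x n) = {a}"
  proof (rule decreasing_closed_nest_sing)
    show "closed (rect x n)" "rect x n \<noteq> {}" for n
      using assms by (simp_all add: closed_rect rect_nonempty)
    show "rect x n \<subseteq> rect x m" if "m \<le> n" for m n
      using that by (rule rect_antimono)
    show "\<exists>n. \<forall>p\<in>rect x n. \<forall>q\<in>rect x n. dist p q < e" if e: "0 < e" for e
    proof -
      obtain n where "diam_bound n < e"
        using ex_diam_bound_less[OF e] ..
      then have "dist p q < e" if "p \<in> rect x n" "q \<in> rect x n" for p q
        using dist_le_in_rect[OF assms that] by linarith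
      then show ?thesis by blast
    qed
  qed
  then obtain a where a: "(\<Inter>n. rect x n) = {a}" ..
  then have iff: "(\<forall>n. p \<in> rect x n) \<longleftrightarrow> p = a" for p
    by blast
  have "point_of x = a"
    unfolding point_of_def by (rule the_equality) (use iff in blast)+
  with iff show ?thesis by simp
qed

lemma point_of_in_rect: "x \<in> zip_space N \<Longrightarrow> point_of x \<in> rect x n"
  using in_all_rect_iff by blast

lemma point_of_in_V_H:
  assumes "x \<in> zip_space N"
  shows "point_of x \<in> V (x 0) \<inter> H (x (-1))"
proof -
  have "x (-1) \<in> Zset"
    using assms by (simp add: zip_space_def)
  then show ?thesis
    using point_of_in_rect[OF assms, of 0] hcyl_singleton by (simp add: rect_def)
qed

lemma f_point_of:
  assumes x: "x \<in> zip_space N"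
  shows "f (point_of x) = point_of (zip_shift x)"
proof -
  have "f (point_of x) \<in> rect (zip_shift x) n" for n
  proof -
    have "point_of x \<in> vcyl (future_word x (Suc n))"
      using point_of_in_rect[OF x, of "Suc n"] by (simp add: rect_def)
    then have future: "f (point_of x) \<in> vcyl (future_word (zip_shift x) n)"
      by (simp add: future_word_Suc_zip_shift)
    have "x 0 \<in> Sset N"
      using x by (simp add: zip_space_def)
    then have "f (point_of x) \<in> H (tau (x 0))"
      using point_of_in_V_H[OF x] bij_V_H unfolding bij_betw_def by blast
    moreover have "f (point_of x) \<in> f ` hcyl (past_word x n)"
      using point_of_in_rect[OF x, of n] by (simp add: rect_def)
    ultimately have "f (point_of x) \<in> hcyl (past_word (zip_shift x) (Suc n))"
      by (simp add: past_word_zip_shift_Suc)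
    then have "f (point_of x) \<in> hcyl (past_word (zip_shift x) n)"
      using hcyl_append_subset unfolding past_word_Suc by blast
    with future show ?thesis
      by (simp add: rect_def)
  qed
  then show ?thesis
    using in_all_rect_iff[OF zip_shift_in_zip_space[OF x]] by blast
qed

lemma point_of_eq_imp_eq_at_minus_one:
  assumes "x \<in> zip_space N" "y \<in> zip_space N" "point_of x = point_of y"
  shows "x (-1) = y (-1)"
proof -
  have "x (-1) \<in> Zset" "y (-1) \<in> Zset"
    using assms by (simp_all add: zip_space_def)
  then show ?thesis
    using point_of_in_V_H[OF assms(1)] point_of_in_V_H[OF assms(2)] assms(3) H_disjoint
    by (auto simp: Zset_def)
qed

lemma point_of_eq_imp_past_eq:
  "x \<in> zip_space N \<Longrightarrow> y \<in> zip_space N \<Longrightarrow> point_of x = point_of y \<Longrightarrow> x (- int k - 1) = y (- int k - 1)"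
proof (induction k arbitrary: x y)
  case 0
  then show ?case
    using point_of_eq_imp_eq_at_minus_one by simp
next
  case (Suc k)
  note x = Suc.prems(1) and y = Suc.prems(2)
  have "x (-1) = y (-1)"
    using point_of_eq_imp_eq_at_minus_one Suc.prems by blast
  define s where "s = tau_section (x (-1))"
  have "x (-1) \<in> Zset"
    using x by (simp add: zip_space_def)
  then have s: "s \<in> Sset N" "tau s = x (-1)" "tau s = y (-1)"
    unfolding s_def using tau_section_in_Sset[OF N_pos] tau_tau_section \<open>x (-1) = y (-1)\<close>
    by simp_all
  have sx: "zip_prepend s x \<in> zip_space N" and sy: "zip_prepend s y \<in> zip_space N"
    using zip_prepend_in_zip_space s(1) x y by auto
  have "f (point_of (zip_prepend s x)) = f (point_of (zip_prepend s y))"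
    using f_point_of[OF sx] f_point_of[OF sy] zip_shift_zip_prepend[of s x, OF s(2)]
      zip_shift_zip_prepend[of s y, OF s(3)]
      Suc.prems(3) by simp
  moreover have "point_of (zip_prepend s x) \<in> V s" "point_of (zip_prepend s y) \<in> V s"
    using point_of_in_V_H[OF sx] point_of_in_V_H[OF sy] by (simp_all add: zip_prepend_def)
  ultimately have "point_of (zip_prepend s x) = point_of (zip_prepend s y)"
    using bij_V_H[OF s(1)] unfolding bij_betw_def inj_on_def by blast
  then have "zip_prepend s x (- int k - 1) = zip_prepend s y (- int k - 1)"
    using Suc.IH[OF sx sy] by blast
  then show ?case
    by (simp add: zip_prepend_def algebra_simps)
qed

lemma inj_on_point_of: "inj_on point_of (zip_space N)"
proof (intro inj_onI ext)
  fix x y i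
  assume x: "x \<in> zip_space N" and y: "y \<in> zip_space N" and eq: "point_of x = point_of y"
  show "x i = y i"
  proof (cases "0 \<le> i")
    case True
    have "point_of x \<in> vcyl (future_word x (nat i))" "point_of x \<in> vcyl (future_word y (nat i))"
      using point_of_in_rect[OF x, of "nat i"] point_of_in_rect[OF y, of "nat i"] eq by (simp_all add: rect_def)
    then have "future_word x (nat i) = future_word y (nat i)"
      using words_in_alphabets[OF x] words_in_alphabets[OF y]
      by (intro vcyl_determines_word) auto
    then have "x (int (nat i)) = y (int (nat i))"
      using future_word_nth[of "nat i" "nat i" x] future_word_nth[of "nat i" "nat i" y] by simp
    with True show ?thesis by simp
  next
    case False
    then have "i = - int (nat (- i - 1)) - 1" by simp
    then show ?thesis
      using point_of_eq_imp_past_eq[OF x y eq] by metis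
  qed
qed

lemma dist_point_of_le:
  assumes "x \<in> zip_space N" "y \<in> zip_space N" "zip_dist x y < 2 powr - real (Suc n)"
  shows "dist (point_of x) (point_of y) \<le> diam_bound n"
proof -
  have "rect y n = rect x n"
    using assms(3) words_cong[of n y x] unfolding zip_dist_less_iff rect_def by metis
  then show ?thesis
    using dist_le_in_rect[OF assms(1) point_of_in_rect[OF assms(1)], of "point_of y"]
      point_of_in_rect[OF assms(2), of n] by simp
qed

lemma continuous_map_point_of: "continuous_map (zip.mtopology N) euclidean point_of"
proof -
  have "\<exists>\<delta>>0. \<forall>y. y \<in> zip_space N \<and> zip_dist x y < \<delta> \<longrightarrow> dist (point_of x) (point_of y) < e"
    if "x \<in> zip_space N" "0 < e" for x e
  proof -
    obtain n where "diam_bound n < e"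
      using ex_diam_bound_less[OF \<open>0 < e\<close>] ..
    then show ?thesis
      using dist_point_of_le[OF \<open>x \<in> zip_space N\<close>]
      by (intro exI[of _ "2 powr - real (Suc n)"]) force
  qed
  then show ?thesis
    using zip.metric_continuous_map[OF Met_TC.Metric_space_axioms, of N point_of] by simp
qed

lemma homeomorphic_map_point_of:
  "homeomorphic_map (zip.mtopology N) (top_of_set (point_of ` zip_space N)) point_of"
proof (rule continuous_imp_homeomorphic_map)
  show "continuous_map (zip.mtopology N) (top_of_set (point_of ` zip_space N)) point_of"
    using continuous_map_point_of by (simp add: continuous_map_in_subtopology)
qed (simp_all add: compact_space_zip inj_on_point_of Hausdorff_space_subtopology)

section \<open>The invariant Cantor set\<close>

lemma compact_point_of_image: "compact (point_of ` zip_space N)"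
  using image_compactin[OF compact_space_zip[unfolded compact_space_def] continuous_map_point_of]
  by simp

lemma islimpt_point_of_image:
  assumes "p \<in> point_of ` zip_space N"
  shows "p islimpt point_of ` zip_space N"
  unfolding islimpt_approachable
proof (intro allI impI)
  fix e :: real
  assume "0 < e"
  obtain x where x: "x \<in> zip_space N" and p: "p = point_of x"
    using assms by blast
  obtain n where n: "diam_bound n < e"
    using ex_diam_bound_less[OF \<open>0 < e\<close>] ..
  define j where "j = int (Suc (Suc n))"
  define c where "c = (if x j = SU 1 then SP 1 else SU 1)"
  have c: "c \<in> Sset N" "c \<noteq> x j"
    using N_pos by (auto simp: c_def Sset_def)
  define y where "y = x(j := c)"
  have y: "y \<in> zip_space N"
    using x c unfolding y_def j_def zip_space_def by auto
  have "zip_dist x y < 2 powr - real (Suc n)"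
    unfolding zip_dist_less_iff y_def j_def by auto
  then have "dist (point_of x) (point_of y) \<le> diam_bound n"
    by (rule dist_point_of_le[OF x y])
  then have "dist (point_of y) p < e"
    using n p by (simp add: dist_commute)
  moreover have "point_of y \<noteq> p"
    using inj_on_point_of x y c p unfolding inj_on_def y_def by (metis fun_upd_same)
  ultimately show "\<exists>p'\<in>point_of ` zip_space N. p' \<noteq> p \<and> dist p' p < e"
    using y by blast
qed

lemma connected_subset_point_of_image_singleton:
  assumes "C \<subseteq> point_of ` zip_space N" "connected C"
  shows "\<exists>a. C \<subseteq> {a}"
proof -
  obtain g where "homeomorphic_maps (zip.mtopology N) (top_of_set (point_of ` zip_space N)) point_of g"
    using homeomorphic_map_point_of homeomorphic_map_maps by blast
  then have "homeomorphic_map (top_of_set (point_of ` zip_space N))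
      (product_topology (\<lambda>i. discrete_topology (zip_alphabet N i)) UNIV) g"
    using homeomorphic_maps_map zip_mtopology_eq_product_topology by metis
  then show ?thesis
    using connected_subset_singleton_if_homeomorphic_product_discrete assms by blast
qed

lemma cantor_set_point_of_image: "cantor_set (point_of ` zip_space N)"
proof -
  have "(\<lambda>i::int. if 0 \<le> i then SU 1 else La) \<in> zip_space N"
    using N_pos by (auto simp: zip_space_def Sset_def Zset_def)
  then have "point_of ` zip_space N \<noteq> {}" by blast
  then show ?thesis
    unfolding cantor_set_def
    using compact_point_of_image islimpt_point_of_image connected_subset_point_of_image_singleton
    by blast
qed

lemma f_image_point_of_image: "f ` point_of ` zip_space N = point_of ` zip_space N"
proof -
  have "f ` point_of ` zip_space N = point_of ` zip_shift ` zip_space N"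
    unfolding image_image using f_point_of by (intro image_cong) auto
  then show ?thesis
    using zip_shift_image[OF N_pos] by simp
qed

lemma point_of_image_subset: "point_of ` zip_space N \<subseteq> (\<Union>s\<in>Sset N. V s) \<inter> (H La \<union> H Lb)"
proof
  fix p assume "p \<in> point_of ` zip_space N"
  then obtain x where x: "x \<in> zip_space N" and p: "p = point_of x" by blast
  then have "x 0 \<in> Sset N" "x (-1) \<in> Zset"
    by (simp_all add: zip_space_def)
  then show "p \<in> (\<Union>s\<in>Sset N. V s) \<inter> (H La \<union> H Lb)"
    using point_of_in_V_H[OF x] p unfolding Zset_def by auto
qed

theorem zip_shift_conjugacy:
  "\<exists>\<Lambda> \<phi>. cantor_set \<Lambda> \<and> f ` \<Lambda> = \<Lambda> \<and> \<Lambda> \<subseteq> (\<Union>s\<in>Sset N. V s) \<inter> (H La \<union> H Lb)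
      \<and> homeomorphic_map (top_of_set \<Lambda>) (zip.mtopology N) \<phi> \<and> (\<forall>p\<in>\<Lambda>. \<phi> (f p) = zip_shift (\<phi> p))"
proof -
  obtain g where g: "homeomorphic_maps (zip.mtopology N) (top_of_set (point_of ` zip_space N)) point_of g"
    using homeomorphic_map_point_of homeomorphic_map_maps by blast
  then have "homeomorphic_map (top_of_set (point_of ` zip_space N)) (zip.mtopology N) g"
    using homeomorphic_maps_map by blast
  moreover have "g (f p) = zip_shift (g p)" if p: "p \<in> point_of ` zip_space N" for p
  proof -
    obtain x where x: "x \<in> zip_space N" and p: "p = point_of x"
      using p by blast
    have "g (point_of y) = y" if "y \<in> zip_space N" for y
      using g that by (simp add: homeomorphic_maps_def)
    then show ?thesis
      using f_point_of[OF x] zip_shift_in_zip_space[OF x] x p by simp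
  qed
  ultimately show ?thesis
    using cantor_set_point_of_image f_image_point_of_image point_of_image_subset by blast
qed

end

theorem theorem3:
  fixes f :: "real \<times> real \<Rightarrow> real \<times> real"
    and D :: "(real \<times> real) set" and c :: "real \<times> real" and r :: real
    and N :: nat and \<mu>h \<mu>v \<alpha>V \<alpha>H :: real
    and Qs :: "nat \<Rightarrow> (real \<times> real) set"
    and H :: "letter \<Rightarrow> (real \<times> real) set" and hl hu :: "letter \<Rightarrow> real \<Rightarrow> real"
    and V :: "letter \<Rightarrow> (real \<times> real) set" and vl vr :: "letter \<Rightarrow> real \<Rightarrow> real"
  assumes disk: "r > 0" "D = cball c r" "unit_sq \<subseteq> D"
    and params: "0 < \<mu>h" "\<mu>h < 1" "0 < \<mu>v" "\<mu>v < 1"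
    and fD: "f ` D \<subseteq> D"
    and N: "N \<ge> 1"
    and Qs: "\<And>i. i \<in> {1..N} \<Longrightarrow> Qs i \<subseteq> D \<and> connected (Qs i)"
      "\<And>i j. i \<in> {1..N} \<Longrightarrow> j \<in> {1..N} \<Longrightarrow> i \<noteq> j \<Longrightarrow> Qs i \<inter> Qs j = {}"
      "\<And>i. i \<in> {1..N} \<Longrightarrow> \<exists>g. homeomorphism (Qs i) (f ` Qs i) f g"
    and A1_H: "\<And>z. z \<in> Zset \<Longrightarrow> hstrip_by \<mu>h (hl z) (hu z) (H z)"
      "H La \<inter> H Lb = {}"
    and A1_V: "\<And>s. s \<in> Sset N \<Longrightarrow> vstrip_by \<mu>v (vl s) (vr s) (V s)"
      "\<And>s t. s \<in> Sset N \<Longrightarrow> t \<in> Sset N \<Longrightarrow> s \<noteq> t \<Longrightarrow> V s \<inter> V t = {}"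
      "\<And>i. i \<in> {1..N} \<Longrightarrow> V (SU i) \<subseteq> Qs i \<and> V (SP i) \<subseteq> Qs i"
      "\<And>s. s \<in> Sset N \<Longrightarrow> \<exists>g. homeomorphism (V s) (H (tau s)) f g"
      "\<And>s. s \<in> Sset N \<Longrightarrow>
          f ` vstrip_hbd (vl s) (vr s) \<subseteq> hstrip_hbd (hl (tau s)) (hu (tau s))"
      "\<And>s. s \<in> Sset N \<Longrightarrow>
          f ` vstrip_vbd (vl s) (vr s) \<subseteq> hstrip_vbd (hl (tau s)) (hu (tau s))"
    and A2: "0 < \<alpha>V" "\<alpha>V < 1" "0 < \<alpha>H" "\<alpha>H < 1"
      "\<And>W j l. j \<in> Sset N \<Longrightarrow> l \<in> Sset N \<Longrightarrow> is_vstrip \<mu>v W \<Longrightarrow> W \<subseteq> V j \<Longrightarrow>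
          is_vstrip \<mu>v (f -` W \<inter> V l) \<and> vwidth (f -` W \<inter> V l) < \<alpha>V * vwidth W"
      "\<And>W j k. j \<in> Zset \<Longrightarrow> k \<in> Zset \<Longrightarrow> is_hstrip \<mu>h W \<Longrightarrow> W \<subseteq> H j \<Longrightarrow>
          is_hstrip \<mu>h (f ` W \<inter> H k) \<and> hwidth (f ` W \<inter> H k) \<le> \<alpha>H * hwidth W"
  shows "\<exists>\<Lambda> \<phi>. cantor_set \<Lambda> \<and> f ` \<Lambda> = \<Lambda>
          \<and> \<Lambda> \<subseteq> (\<Union>s\<in>Sset N. V s) \<inter> (H La \<union> H Lb)
          \<and> homeomorphic_map (top_of_set \<Lambda>)
               (Metric_space.mtopology (zip_space N) zip_dist) \<phi>
          \<and> (\<forall>p\<in>\<Lambda>. \<phi> (f p) = zip_shift (\<phi> p))"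
proof -
  interpret zip_horseshoe f N \<mu>h \<mu>v \<alpha>V \<alpha>H H V
  proof
    show "is_hstrip \<mu>h (H z)" if "z \<in> Zset" for z
      using A1_H(1)[OF that] unfolding is_hstrip_def by blast
    show "is_vstrip \<mu>v (V s)" if "s \<in> Sset N" for s
      using A1_V(1)[OF that] unfolding is_vstrip_def by blast
    show "bij_betw f (V s) (H (tau s))" if "s \<in> Sset N" for s
      using A1_V(4)[OF that] unfolding homeomorphism_def bij_betw_def by (metis inj_on_inverseI)
    show "is_vstrip \<mu>v (f -` W \<inter> V l) \<and> vwidth (f -` W \<inter> V l) \<le> \<alpha>V * vwidth W"
      if "j \<in> Sset N" "l \<in> Sset N" "is_vstrip \<mu>v W" "W \<subseteq> V j" for W j l
      using A2(5)[OF that] by simp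
  qed (use params N A1_H(2) A1_V(2) A2(1-4,6) in auto)
  show ?thesis
    by (rule zip_shift_conjugacy)
qed

end
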